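(* Let $n,m$ be positive integers with $m>1$. (a) $\nu(n)=\nu(n,m)=\lceil n/2\rceil$. (b) If $n\ge m$, then $\nu^*(n,m)=\nu(n,m)+1$ if $n$ is even and $m$ is odd, and $\nu^*(n,m)=\nu(n,m)$ otherwise. In particular, $\nu^*(n,2)=\nu^*(n)=\nu(n)$ for all $n>1$.
   Context: Let $\mathbb F_2=\{0,1\}$ be the field with two elements. For $u\in\mathbb F_2^n$, $|u|$ denotes the Hamming weight of $u$. A wiring on $n$ vertices is a matrix $W=(w_{i,j})\in M(n,n;\mathbb F_2)$ with $w_{i,i}=1$ for all $i$. The degree of vertex $j$ is the number of $1$s in the $j$th column of $W$, and $\deg(W)$ is the maximum degree over all vertices. For $c\in\mathbb F_2^n$, $M(W,c)=\max\{|Wx+c| : x\in\mathbb F_2^n\}$. For $n,m\ge1$, $A(n,m)$ is the set of wirings on $n$ vertices with $\deg(W)\le m$; for $n\ge m$, $A^*(n,m)$ is the set of wirings on $n$ vertices in which every vertex has degree exactly $m$. Define $\nu(n,m)=\min\{M(W,c): W\in A(n,m),\ c\in\mathbb F_2^n\}$, for $n\ge m$ $\nu^*(n,m)=\min\{M(W,c): W\in A^*(n,m),\ c\in\mathbb F_2^n\}$, and $\nu(n)=\nu(n,n)$, $\nu^*(n)=\nu^*(n,n)$. *)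

theory Defs
  imports Complex_Main "HOL-Library.Z2"
begin

text \<open>Vectors in F_2^n are functions nat => bit supported on {0..<n};
  n x n matrices over F_2 are functions nat => nat => bit supported on {0..<n} x {0..<n}.\<close>

definition vecs :: "nat \<Rightarrow> (nat \<Rightarrow> bit) set" where
  "vecs n = {x. \<forall>i\<ge>n. x i = 0}"

definition weight :: "nat \<Rightarrow> (nat \<Rightarrow> bit) \<Rightarrow> nat" where
  "weight n u = card {i. i < n \<and> u i \<noteq> 0}"

definition mat_vec :: "nat \<Rightarrow> (nat \<Rightarrow> nat \<Rightarrow> bit) \<Rightarrow> (nat \<Rightarrow> bit) \<Rightarrow> (nat \<Rightarrow> bit)" where
  "mat_vec n W x = (\<lambda>i. if i < n then (\<Sum>j<n. W i j * x j) else 0)"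

definition is_matrix :: "nat \<Rightarrow> (nat \<Rightarrow> nat \<Rightarrow> bit) \<Rightarrow> bool" where
  "is_matrix n W \<longleftrightarrow> (\<forall>i j. (n \<le> i \<or> n \<le> j) \<longrightarrow> W i j = 0)"

definition wiring :: "nat \<Rightarrow> (nat \<Rightarrow> nat \<Rightarrow> bit) \<Rightarrow> bool" where
  "wiring n W \<longleftrightarrow> is_matrix n W \<and> (\<forall>i<n. W i i = 1)"

definition vdeg :: "nat \<Rightarrow> (nat \<Rightarrow> nat \<Rightarrow> bit) \<Rightarrow> nat \<Rightarrow> nat" where
  "vdeg n W j = card {i. i < n \<and> W i j = 1}"

definition wdeg :: "nat \<Rightarrow> (nat \<Rightarrow> nat \<Rightarrow> bit) \<Rightarrow> nat" where
  "wdeg n W = Max (vdeg n W ` {..<n})"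

definition MW :: "nat \<Rightarrow> (nat \<Rightarrow> nat \<Rightarrow> bit) \<Rightarrow> (nat \<Rightarrow> bit) \<Rightarrow> nat" where
  "MW n W c = Max ((\<lambda>x. weight n (\<lambda>i. mat_vec n W x i + c i)) ` vecs n)"

definition A :: "nat \<Rightarrow> nat \<Rightarrow> (nat \<Rightarrow> nat \<Rightarrow> bit) set" where
  "A n m = {W. wiring n W \<and> wdeg n W \<le> m}"

definition A_star :: "nat \<Rightarrow> nat \<Rightarrow> (nat \<Rightarrow> nat \<Rightarrow> bit) set" where
  "A_star n m = {W. wiring n W \<and> (\<forall>j<n. vdeg n W j = m)}"

definition nu :: "nat \<Rightarrow> nat \<Rightarrow> nat" where
  "nu n m = Min {MW n W c | W c. W \<in> A n m \<and> c \<in> vecs n}"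

definition nu_star :: "nat \<Rightarrow> nat \<Rightarrow> nat" where
  "nu_star n m = Min {MW n W c | W c. W \<in> A_star n m \<and> c \<in> vecs n}"

abbreviation nu1 :: "nat \<Rightarrow> nat" where "nu1 n \<equiv> nu n n"
abbreviation nu_star1 :: "nat \<Rightarrow> nat" where "nu_star1 n \<equiv> nu_star n n"

end

theory Submission
  imports Defs
begin

text \<open>
  Flipping x i flips coordinate i of W x + c, because w i i = 1. Hence every coordinate of W x + c
  is 1 for exactly half of all x, the average weight of W x + c is n/2, and M(W, c) \<ge> \<lceil>n/2\<rceil>.
  If n is even and some vertex j has odd degree, equality would force every W x + c to have weight
  exactly n/2; but the weights of W e + c, for e the j-th unit vector, and of c differ by the
  degree of j modulo 2.

  For the matching upper bound write n = 2P + E. Give rows i and i + P (i < P) the same support: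
  a cyclic window of width w among the first 2P columns, plus some of the last E columns. With c the
  indicator of [P, 2P), coordinates i and i + P of W x + c always differ, so exactly P of the first
  2P coordinates are 1. A tail of E \<le> 3 further rows, chosen according to the parities of n and m,
  makes every column degree equal to m while adding at most 2 to the weight.
\<close>

declare add_bit_eq_xor[simp del] mult_bit_eq_and[simp del]

lemma of_nat_bit: "(of_nat k :: bit) = of_bool (odd k)"
  by (induction k) auto

lemma finite_vecs: "finite (vecs n)"
proof -
  have "vecs n \<subseteq> (\<lambda>S i. of_bool (i \<in> S)) ` Pow {..<n}"
  proof
    fix x assume "x \<in> vecs n"
    then have "x = (\<lambda>i. of_bool (i \<in> {i. i < n \<and> x i = 1}))"
      by (auto simp: vecs_def fun_eq_iff)
    then show "x \<in> (\<lambda>S i. of_bool (i \<in> S)) ` Pow {..<n}" by blast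
  qed
  then show ?thesis by (rule finite_subset) auto
qed

lemma zero_in_vecs: "(\<lambda>_. 0) \<in> vecs n"
  by (simp add: vecs_def)

lemma weight_eq_sum: "weight n u = (\<Sum>i<n. of_bool (u i \<noteq> 0))"
  by (simp add: weight_def Int_def)

lemma weight_le: "weight n u \<le> n"
  using card_mono[of "{..<n}" "{i. i < n \<and> u i \<noteq> 0}"] by (auto simp: weight_def)

lemma of_nat_weight: "(of_nat (weight n u) :: bit) = (\<Sum>i<n. u i)"
  unfolding weight_eq_sum of_nat_sum by (intro sum.cong) auto

definition affine_map :: "nat \<Rightarrow> (nat \<Rightarrow> nat \<Rightarrow> bit) \<Rightarrow> (nat \<Rightarrow> bit) \<Rightarrow> (nat \<Rightarrow> bit) \<Rightarrow> nat \<Rightarrow> bit" where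
  "affine_map n W c x = (\<lambda>i. mat_vec n W x i + c i)"

lemma weight_le_MW: "x \<in> vecs n \<Longrightarrow> weight n (affine_map n W c x) \<le> MW n W c"
  unfolding MW_def affine_map_def using finite_vecs by (intro Max_ge) auto

lemma MW_leI:
  assumes "\<And>x. x \<in> vecs n \<Longrightarrow> weight n (affine_map n W c x) \<le> b"
  shows "MW n W c \<le> b"
  unfolding MW_def using assms finite_vecs zero_in_vecs[of n]
  by (subst Max_le_iff) (auto simp: affine_map_def)

lemma MW_le: "MW n W c \<le> n"
  by (rule MW_leI) (rule weight_le)

section \<open>The averaging and parity lower bounds\<close>

lemma mat_vec_flip:
  assumes "wiring n W" "i < n"
  shows "mat_vec n W (x(i := x i + 1)) i = mat_vec n W x i + 1"
proof -
  have "(x(i := x i + 1)) j = x j + of_bool (j = i)" for j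
    by simp
  then have "mat_vec n W (x(i := x i + 1)) i = (\<Sum>j<n. W i j * x j + (if j = i then W i j else 0))"
    using assms(2) unfolding mat_vec_def by (auto simp: distrib_left intro!: sum.cong)
  also have "\<dots> = mat_vec n W x i + W i i"
    using assms(2) by (simp add: sum.distrib mat_vec_def)
  finally show ?thesis
    using assms unfolding wiring_def by simp
qed

lemma card_affine_map_nonzero:
  assumes "wiring n W" "i < n"
  shows "2 * card {x\<in>vecs n. affine_map n W c x i \<noteq> 0} = card (vecs n)"
proof -
  let ?A = "{x\<in>vecs n. affine_map n W c x i \<noteq> 0}" and ?B = "{x\<in>vecs n. affine_map n W c x i = 0}"
  let ?flip = "\<lambda>x. x(i := x i + 1)"
  have flip_vecs: "?flip x \<in> vecs n" if "x \<in> vecs n" for x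
    using that assms(2) by (auto simp: vecs_def)
  have flip_flip: "?flip (?flip x) = x" for x :: "nat \<Rightarrow> bit"
    by (auto simp: fun_eq_iff)
  have flip_affine: "affine_map n W c (?flip x) i = affine_map n W c x i + 1" for x
    using mat_vec_flip[OF assms] by (simp add: affine_map_def algebra_simps)
  have "bij_betw ?flip ?A ?B"
    by (rule bij_betw_byWitness[where f' = ?flip]) (auto simp: flip_flip flip_vecs flip_affine)
  then have "card ?A = card ?B"
    by (rule bij_betw_same_card)
  moreover have "card (vecs n) = card ?A + card ?B"
    using finite_vecs by (subst card_Un_disjoint[symmetric]) (auto intro: arg_cong[where f = card])
  ultimately show ?thesis by simp
qed

lemma sum_weight_affine_map:
  assumes "wiring n W"
  shows "2 * (\<Sum>x\<in>vecs n. weight n (affine_map n W c x)) = n * card (vecs n)"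
proof -
  have "2 * (\<Sum>x\<in>vecs n. weight n (affine_map n W c x))
      = (\<Sum>i<n. 2 * card {x\<in>vecs n. affine_map n W c x i \<noteq> 0})"
    unfolding weight_eq_sum sum_distrib_left
    by (subst sum.swap) (simp add: finite_vecs Int_def mult.commute)
  also have "\<dots> = n * card (vecs n)"
    using card_affine_map_nonzero[OF assms] by simp
  finally show ?thesis .
qed

lemma MW_ge_half:
  assumes "wiring n W"
  shows "n \<le> 2 * MW n W c"
proof -
  have "n * card (vecs n) = 2 * (\<Sum>x\<in>vecs n. weight n (affine_map n W c x))"
    using sum_weight_affine_map[OF assms] by simp
  also have "\<dots> \<le> 2 * MW n W c * card (vecs n)"
    using sum_mono[of "vecs n" "\<lambda>x. weight n (affine_map n W c x)" "\<lambda>_. MW n W c"] weight_le_MW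
    by (simp add: mult.commute)
  finally have "n * card (vecs n) \<le> 2 * MW n W c * card (vecs n)" .
  moreover have "0 < card (vecs n)"
    using finite_vecs zero_in_vecs card_gt_0_iff by blast
  ultimately show ?thesis
    by simp
qed

lemma weight_eq_half_if_MW_le_half:
  assumes "wiring n W" "even n" "MW n W c \<le> n div 2" "x \<in> vecs n"
  shows "weight n (affine_map n W c x) = n div 2"
proof (rule ccontr)
  assume "weight n (affine_map n W c x) \<noteq> n div 2"
  then have "weight n (affine_map n W c x) < n div 2"
    using weight_le_MW[OF assms(4), of W c] assms(3) by simp
  then have "(\<Sum>y\<in>vecs n. weight n (affine_map n W c y)) < (\<Sum>y\<in>vecs n. n div 2)"
    using finite_vecs assms(3,4)
    by (intro sum_strict_mono_ex1) (auto intro: order_trans[OF weight_le_MW])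
  then show False
    using sum_weight_affine_map[OF assms(1), of c] assms(2) by auto
qed

lemma MW_gt_half_if_odd_vdeg:
  assumes "wiring n W" "even n" "j < n" "odd (vdeg n W j)"
  shows "n div 2 < MW n W c"
proof (rule ccontr)
  assume "\<not> n div 2 < MW n W c"
  then have half: "weight n (affine_map n W c x) = n div 2" if "x \<in> vecs n" for x
    using weight_eq_half_if_MW_le_half[OF assms(1,2)] that by simp
  define e :: "nat \<Rightarrow> bit" where "e = (\<lambda>k. of_bool (k = j))"
  have "e \<in> vecs n"
    using assms(3) by (auto simp: vecs_def e_def)
  have column: "affine_map n W c e i = W i j + affine_map n W c (\<lambda>_. 0) i" if "i < n" for i
    using that assms(3) by (simp add: affine_map_def mat_vec_def e_def of_bool_def if_distrib[where f = "\<lambda>t. _ * t"] cong: if_cong)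
  have "vdeg n W j = weight n (\<lambda>i. W i j)"
    unfolding vdeg_def weight_def by simp
  then have "(of_nat (weight n (affine_map n W c e)) :: bit)
      = of_nat (vdeg n W j) + of_nat (weight n (affine_map n W c (\<lambda>_. 0)))"
    by (simp add: of_nat_weight column sum.distrib)
  then show False
    using half[OF \<open>e \<in> vecs n\<close>] half[OF zero_in_vecs] assms(4) by (simp add: of_nat_bit)
qed

section \<open>Wirings built from doubled rows\<close>

lemma card_less_double:
  fixes P :: nat
  shows "card {i. i < 2 * P \<and> Q i} = card {i. i < P \<and> Q i} + card {i. i < P \<and> Q (i + P)}"
proof -
  have "{i. i < 2 * P \<and> Q i} = {i. i < P \<and> Q i} \<union> (\<lambda>i. i + P) ` {i. i < P \<and> Q (i + P)}"
  proof (intro set_eqI iffI)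
    fix i assume "i \<in> {i. i < 2 * P \<and> Q i}"
    then show "i \<in> {i. i < P \<and> Q i} \<union> (\<lambda>i. i + P) ` {i. i < P \<and> Q (i + P)}"
      by (cases "i < P") (auto simp: image_iff intro!: exI[of _ "i - P"])
  qed auto
  moreover have "card ((\<lambda>i. i + P) ` {i. i < P \<and> Q (i + P)}) = card {i. i < P \<and> Q (i + P)}"
    by (rule card_image) simp
  moreover have "{i. i < P \<and> Q i} \<inter> (\<lambda>i. i + P) ` {i. i < P \<and> Q (i + P)} = {}"
    by auto
  ultimately show ?thesis
    by (simp add: card_Un_disjoint)
qed

lemma card_interval_le:
  fixes a k :: nat
  shows "card {i. a \<le> i \<and> i < a + k \<and> Q i} \<le> k"
  by (rule order_trans[OF card_mono[of "{a..<a + k}"]]) auto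

lemma card_cyclic_window:
  assumes "w \<le> P"
  shows "card {i. i < P \<and> (int j - int i) mod int P < int w} = w"
proof -
  let ?f = "\<lambda>i. nat ((int j - int i) mod int P)"
  have ff_int: "(int j - (int j - int d) mod int P) mod int P = int d" if "d < P" for d
    using that by (simp add: mod_diff_right_eq)
  have ff: "?f (?f d) = d" if "d < P" for d
  proof -
    have "0 \<le> (int j - int d) mod int P"
      using that by simp
    then show ?thesis
      using ff_int[OF that] by simp
  qed
  have "{i. i < P \<and> (int j - int i) mod int P < int w} = ?f ` {..<w}"
  proof (rule set_eqI)
    fix i
    show "i \<in> {i. i < P \<and> (int j - int i) mod int P < int w} \<longleftrightarrow> i \<in> ?f ` {..<w}"
      using assms ff[of i] ff_int
      by (auto simp: image_iff nat_less_iff intro: bexI[of _ "?f i"])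
  qed
  moreover have "inj_on ?f {..<w}"
    by (rule inj_on_inverseI[where g = ?f]) (use assms ff in auto)
  ultimately show ?thesis
    by (simp add: card_image)
qed

lemma card_less_split:
  fixes a n :: nat
  assumes "a \<le> n"
  shows "card {i. i < n \<and> Q i} = card {i. i < a \<and> Q i} + card {i. a \<le> i \<and> i < n \<and> Q i}"
proof -
  have "{i. i < n \<and> Q i} = {i. i < a \<and> Q i} \<union> {i. a \<le> i \<and> i < n \<and> Q i}"
    using assms by auto
  moreover have "card ({i. i < a \<and> Q i} \<union> {i. a \<le> i \<and> i < n \<and> Q i})
      = card {i. i < a \<and> Q i} + card {i. a \<le> i \<and> i < n \<and> Q i}"
    by (rule card_Un_disjoint) auto
  ultimately show ?thesis
    by simp
qed

lemma card_nonzero_doubled: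
  fixes v :: "nat \<Rightarrow> bit"
  assumes "\<And>i. i < P \<Longrightarrow> v (i + P) = v i + 1"
  shows "card {i. i < 2 * P \<and> v i \<noteq> 0} = P"
proof -
  have "b + 1 \<noteq> 0 \<longleftrightarrow> b = 0" for b :: bit
    by (cases b) auto
  then have "{i. i < P \<and> v (i + P) \<noteq> 0} = {i. i < P \<and> v i = 0}"
    using assms by auto
  then have "card {i. i < 2 * P \<and> v i \<noteq> 0} = card {i. i < P \<and> v i \<noteq> 0} + card {i. i < P \<and> v i = 0}"
    by (simp add: card_less_double[of P])
  also have "\<dots> = card ({i. i < P \<and> v i \<noteq> 0} \<union> {i. i < P \<and> v i = 0})"
    by (rule card_Un_disjoint[symmetric]) auto
  also have "{i. i < P \<and> v i \<noteq> 0} \<union> {i. i < P \<and> v i = 0} = {..<P}"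
    by auto
  finally show ?thesis by simp
qed

lemma card_nonzero_triple_le:
  fixes s :: "nat \<Rightarrow> bit"
  assumes "s (a + 2) = s a + s (a + 1)"
  shows "card {i. a \<le> i \<and> i < a + 3 \<and> s i \<noteq> 0} \<le> 2"
proof -
  obtain k where k: "k \<in> {a, a + 1, a + 2}" "s k = 0"
    using assms by (cases "s a"; cases "s (a + 1)") auto
  have "card {i. a \<le> i \<and> i < a + 3 \<and> s i \<noteq> 0} \<le> card ({a, a + 1, a + 2} - {k})"
    using k by (intro card_mono) auto
  also have "\<dots> = 2"
    using k by (auto simp: card_Diff_singleton)
  finally show ?thesis .
qed

definition support_matrix :: "nat \<Rightarrow> (nat \<Rightarrow> nat set) \<Rightarrow> nat \<Rightarrow> nat \<Rightarrow> bit" where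
  "support_matrix n R i j = of_bool (i < n \<and> j < n \<and> j \<in> R i)"

lemma wiring_support_matrix: "(\<And>i. i < n \<Longrightarrow> i \<in> R i) \<Longrightarrow> wiring n (support_matrix n R)"
  by (auto simp: wiring_def is_matrix_def support_matrix_def)

lemma vdeg_support_matrix: "j < n \<Longrightarrow> vdeg n (support_matrix n R) j = card {i. i < n \<and> j \<in> R i}"
  unfolding vdeg_def support_matrix_def by (rule arg_cong[where f = card]) auto

lemma mat_vec_support_matrix:
  "i < n \<Longrightarrow> mat_vec n (support_matrix n R) x i = sum x {j. j < n \<and> j \<in> R i}"
  unfolding mat_vec_def support_matrix_def by (simp add: Int_def conj_commute)

definition doubled_row :: "nat \<Rightarrow> nat \<Rightarrow> nat \<Rightarrow> nat \<Rightarrow> nat \<Rightarrow> nat set" where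
  "doubled_row P E w u i =
     {j. j < 2 * P \<and> (int j - int i) mod int P < int w} \<union> {j. 2 * P \<le> j \<and> j < 2 * P + E \<and> i mod P < u}"

lemma doubled_row_add_self: "doubled_row P E w u (i + P) = doubled_row P E w u i"
proof -
  have "(int j - int (i + P)) mod int P = (int j - int i) mod int P" for j
    by (simp add: diff_diff_eq[symmetric] minus_mod_self2)
  then show ?thesis
    by (simp add: doubled_row_def)
qed

lemma card_doubled_row_column:
  assumes "0 < P \<Longrightarrow> w \<le> P" "u \<le> P" "j < 2 * P + E"
  shows "card {i. i < 2 * P \<and> j \<in> doubled_row P E w u i} = (if j < 2 * P then 2 * w else 2 * u)"
proof -
  have "card {i. i < 2 * P \<and> j \<in> doubled_row P E w u i} = 2 * card {i. i < P \<and> j \<in> doubled_row P E w u i}"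
    using card_less_double[of P "\<lambda>i. j \<in> doubled_row P E w u i"] by (simp add: doubled_row_add_self)
  moreover have "card {i. i < P \<and> j \<in> doubled_row P E w u i} = w" if "j < 2 * P"
  proof -
    have "{i. i < P \<and> j \<in> doubled_row P E w u i} = {i. i < P \<and> (int j - int i) mod int P < int w}"
      using that by (auto simp: doubled_row_def)
    then show ?thesis
      using card_cyclic_window[of w P j] assms(1) that by simp
  qed
  moreover have "{i. i < P \<and> j \<in> doubled_row P E w u i} = {..<u}" if "\<not> j < 2 * P"
    using that assms(2,3) by (auto simp: doubled_row_def)
  ultimately show ?thesis
    by auto
qed

lemma exists_doubled_wiring:
  fixes tail :: "nat \<Rightarrow> nat set"
  assumes window: "0 < P \<Longrightarrow> 0 < w \<and> w \<le> P" and "u \<le> P"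
    and tail_diag: "\<And>i. 2 * P \<le> i \<Longrightarrow> i < 2 * P + E \<Longrightarrow> i \<in> tail i"
    and tail_vdeg: "\<And>j. j < 2 * P + E \<Longrightarrow>
      (if j < 2 * P then 2 * w else 2 * u) + card {i. 2 * P \<le> i \<and> i < 2 * P + E \<and> j \<in> tail i} = m"
    and tail_weight: "\<And>x :: nat \<Rightarrow> bit. P + card {i. 2 * P \<le> i \<and> i < 2 * P + E \<and> sum x {j. j < 2 * P + E \<and> j \<in> tail i} \<noteq> 0} \<le> t"
  shows "\<exists>W c. W \<in> A_star (2 * P + E) m \<and> c \<in> vecs (2 * P + E) \<and> MW (2 * P + E) W c \<le> t"
proof -
  define n where "n = 2 * P + E"
  define R where "R i = (if i < 2 * P then doubled_row P E w u i else tail i)" for i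
  define W where "W = support_matrix n R"
  define c :: "nat \<Rightarrow> bit" where "c i = of_bool (P \<le> i \<and> i < 2 * P)" for i
  have "wiring n W"
    unfolding W_def
  proof (rule wiring_support_matrix)
    fix i assume "i < n"
    then show "i \<in> R i"
      using window tail_diag by (cases "i < 2 * P") (auto simp: R_def doubled_row_def n_def)
  qed
  moreover have "vdeg n W j = m" if "j < n" for j
  proof -
    have "vdeg n W j = card {i. i < 2 * P \<and> j \<in> R i} + card {i. 2 * P \<le> i \<and> i < n \<and> j \<in> R i}"
      using that card_less_split[of "2 * P" n "\<lambda>i. j \<in> R i"] by (simp add: W_def vdeg_support_matrix n_def)
    also have "{i. i < 2 * P \<and> j \<in> R i} = {i. i < 2 * P \<and> j \<in> doubled_row P E w u i}"
      by (auto simp: R_def)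
    also have "{i. 2 * P \<le> i \<and> i < n \<and> j \<in> R i} = {i. 2 * P \<le> i \<and> i < n \<and> j \<in> tail i}"
      by (auto simp: R_def)
    also have "card {i. i < 2 * P \<and> j \<in> doubled_row P E w u i}
        + card {i. 2 * P \<le> i \<and> i < n \<and> j \<in> tail i} = m"
      using that tail_vdeg[of j] card_doubled_row_column[of P w u j E] window assms(2)
      by (simp add: n_def)
    finally show ?thesis .
  qed
  moreover have "c \<in> vecs n"
    by (simp add: vecs_def c_def n_def)
  moreover have "MW n W c \<le> t"
  proof (rule MW_leI)
    fix x
    let ?v = "affine_map n W c x"
    have v: "?v i = sum x {j. j < n \<and> j \<in> R i} + c i" if "i < n" for i
      using that by (simp add: affine_map_def W_def mat_vec_support_matrix)
    have "?v (i + P) = ?v i + 1" if "i < P" for i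
      using that v[of i] v[of "i + P"] by (simp add: R_def doubled_row_add_self c_def n_def)
    then have "card {i. i < 2 * P \<and> ?v i \<noteq> 0} = P"
      by (rule card_nonzero_doubled)
    moreover have "{i. 2 * P \<le> i \<and> i < n \<and> ?v i \<noteq> 0}
        = {i. 2 * P \<le> i \<and> i < n \<and> sum x {j. j < n \<and> j \<in> tail i} \<noteq> 0}"
      using v by (auto simp: R_def c_def)
    ultimately show "weight n ?v \<le> t"
      using tail_weight[of x] card_less_split[of "2 * P" n "\<lambda>i. ?v i \<noteq> 0"] by (simp add: weight_def n_def)
  qed
  ultimately show ?thesis
    unfolding A_star_def n_def by blast
qed

text \<open>
  Odd n and even m need a tail of three rows, since the doubled rows give every column an even
  degree. Tail row 2P + 2 is the sum of tail rows 2P and 2P + 1, so the three tail coordinates of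
  W x + c are never all 1. For m \<ge> 4 the tail rows 2P and 2P + 2 also cover the first 2P columns,
  which lets the window shrink to m/2 - 1 \<le> P even when m = n - 1.
\<close>
lemma exists_A_star_odd_even:
  assumes "odd n" "even m" "2 \<le> m" "m < n"
  shows "\<exists>W c. W \<in> A_star n m \<and> c \<in> vecs n \<and> MW n W c \<le> (n + 1) div 2"
proof -
  define P where "P = n div 2 - 1"
  have n: "n = 2 * P + 3" and P: "m div 2 \<le> P + 1"
    using assms by (auto simp: P_def elim!: oddE evenE)
  define tail where "tail i = (if i = 2 * P + 1 then {2 * P + 1}
      else {2 * P, 2 * P + 2} \<union> {j. i = 2 * P + 2 \<and> j = 2 * P + 1} \<union> {j. 4 \<le> m \<and> j < 2 * P})" for i
  have tail_col: "{i. 2 * P \<le> i \<and> i < 2 * P + 3 \<and> j \<in> tail i}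
      = (if j < 2 * P then (if 4 \<le> m then {2 * P, 2 * P + 2} else {})
         else if j = 2 * P + 1 then {2 * P + 1, 2 * P + 2} else {2 * P, 2 * P + 2})"
    if "j < 2 * P + 3" for j
    using that by (auto simp: tail_def)
  have "\<exists>W c. W \<in> A_star (2 * P + 3) m \<and> c \<in> vecs (2 * P + 3) \<and> MW (2 * P + 3) W c \<le> P + 2"
  proof (rule exists_doubled_wiring[where w = "if 4 \<le> m then m div 2 - 1 else 1" and u = "m div 2 - 1"])
    fix j assume "j < 2 * P + 3"
    then show "(if j < 2 * P then 2 * (if 4 \<le> m then m div 2 - 1 else 1) else 2 * (m div 2 - 1))
        + card {i. 2 * P \<le> i \<and> i < 2 * P + 3 \<and> j \<in> tail i} = m"
      using assms(2,3) by (simp add: tail_col) (auto elim!: evenE)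
  next
    fix x :: "nat \<Rightarrow> bit"
    let ?s = "\<lambda>i. sum x {j. j < 2 * P + 3 \<and> j \<in> tail i}"
    have "{j. j < 2 * P + 3 \<and> j \<in> tail (2 * P + 2)} = insert (2 * P + 1) {j. j < 2 * P + 3 \<and> j \<in> tail (2 * P)}"
      by (auto simp: tail_def)
    then have "?s (2 * P + 2) = x (2 * P + 1) + ?s (2 * P)"
      by (simp add: tail_def)
    moreover have "{j. j < 2 * P + 3 \<and> j \<in> tail (2 * P + 1)} = {2 * P + 1}"
      by (auto simp: tail_def)
    ultimately have "?s (2 * P + 2) = ?s (2 * P) + ?s (2 * P + 1)"
      by (simp add: add.commute)
    then show "P + card {i. 2 * P \<le> i \<and> i < 2 * P + 3 \<and> ?s i \<noteq> 0} \<le> P + 2"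
      using card_nonzero_triple_le[of ?s "2 * P"] by (simp add: numeral_eq_Suc)
  qed (use P assms(3) in \<open>auto simp: tail_def\<close>)
  then show ?thesis
    using n by simp
qed

lemma exists_A_star_MW_le:
  assumes "min n 2 \<le> m" "m \<le> n"
  shows "\<exists>W c. W \<in> A_star n m \<and> c \<in> vecs n \<and> MW n W c \<le> (n + 1) div 2 + of_bool (even n \<and> odd m)"
proof -
  consider "even n" "even m" | "odd n" "odd m" | "even n" "odd m" | "odd n" "even m"
    by blast
  then show ?thesis
  proof cases
    case 1
    then show ?thesis
      using exists_doubled_wiring[where P = "n div 2" and E = 0 and w = "m div 2" and u = "m div 2"
          and m = m and t = "n div 2" and tail = "\<lambda>_. {}"] assms
      by (auto elim!: evenE)
  next
    case 2
    then obtain P where n: "n = 2 * P + 1"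
      by (auto elim: oddE)
    have "\<exists>W c. W \<in> A_star (2 * P + 1) m \<and> c \<in> vecs (2 * P + 1) \<and> MW (2 * P + 1) W c \<le> P + 1"
    proof (rule exists_doubled_wiring[where w = "m div 2" and u = "m div 2" and tail = "\<lambda>_. UNIV"])
      fix j :: nat
      have "{i. 2 * P \<le> i \<and> i < 2 * P + 1 \<and> j \<in> UNIV} = {2 * P}"
        by auto
      then show "(if j < 2 * P then 2 * (m div 2) else 2 * (m div 2))
          + card {i. 2 * P \<le> i \<and> i < 2 * P + 1 \<and> j \<in> UNIV} = m"
        using 2 by simp
    qed (use 2 assms n card_interval_le[of "2 * P" 1] in \<open>auto elim!: oddE\<close>)
    then show ?thesis
      using 2 n by simp
  next
    case 3
    define P where "P = n div 2 - 1"
    have n: "n = 2 * P + 2"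
      using 3 assms(2) by (auto simp: P_def le_less elim!: evenE)
    define tail where "tail i = (if i = 2 * P then - {2 * P + 1} else {2 * P + 1})" for i
    have "\<exists>W c. W \<in> A_star (2 * P + 2) m \<and> c \<in> vecs (2 * P + 2) \<and> MW (2 * P + 2) W c \<le> P + 2"
    proof (rule exists_doubled_wiring[where w = "m div 2" and u = "m div 2" and tail = tail])
      fix j assume "j < 2 * P + 2"
      then have "{i. 2 * P \<le> i \<and> i < 2 * P + 2 \<and> j \<in> tail i} = {if j = 2 * P + 1 then 2 * P + 1 else 2 * P}"
        by (auto simp: tail_def)
      then show "(if j < 2 * P then 2 * (m div 2) else 2 * (m div 2))
          + card {i. 2 * P \<le> i \<and> i < 2 * P + 2 \<and> j \<in> tail i} = m"
        using 3 by simp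
    qed (use 3 assms n card_interval_le[of "2 * P" 2] in \<open>auto simp: tail_def elim!: oddE\<close>)
    then show ?thesis
      using 3 n by simp
  next
    case 4
    then have "m < n" "2 \<le> m"
      using assms by (auto simp: le_less)
    then show ?thesis
      using 4 exists_A_star_odd_even by auto
  qed
qed

section \<open>The values of \<open>\<nu>\<close> and \<open>\<nu>\<^sup>*\<close>\<close>

text \<open>For n = 0 the degree wdeg is the maximum of an empty set, hence unspecified.\<close>
lemma A_star_subset_A:
  assumes "0 < n" "k \<le> m"
  shows "A_star n k \<subseteq> A n m"
proof
  fix W assume "W \<in> A_star n k"
  then have "wiring n W" and "vdeg n W ` {..<n} = {k}"
    using assms(1) by (auto simp: A_star_def image_constant_conv)
  then show "W \<in> A n m"
    using assms(2) by (simp add: A_def wdeg_def)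
qed

lemma MW_ge_A_star:
  assumes "W \<in> A_star n m" "0 < n"
  shows "(n + 1) div 2 + of_bool (even n \<and> odd m) \<le> MW n W c"
proof -
  have W: "wiring n W" "vdeg n W 0 = m"
    using assms by (auto simp: A_star_def)
  have "(n + 1) div 2 \<le> MW n W c"
    using MW_ge_half[OF W(1), of c] by linarith
  moreover have "(n + 1) div 2 < MW n W c" if "even n" "odd m"
    using MW_gt_half_if_odd_vdeg[OF W(1) that(1) assms(2), of c] W(2) that by auto
  ultimately show ?thesis
    by auto
qed

lemma Min_MW_eqI:
  assumes "\<And>W c. W \<in> S \<Longrightarrow> c \<in> vecs n \<Longrightarrow> b \<le> MW n W c"
    and "W \<in> S" "c \<in> vecs n" "MW n W c \<le> b"
  shows "Min {MW n W c | W c. W \<in> S \<and> c \<in> vecs n} = b"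
proof (rule Min_eqI)
  show "finite {MW n W c | W c. W \<in> S \<and> c \<in> vecs n}"
    by (rule finite_subset[of _ "{..n}"]) (auto intro: MW_le)
  show "b \<in> {MW n W c | W c. W \<in> S \<and> c \<in> vecs n}"
    using assms by (force intro: antisym)
qed (use assms(1) in auto)

lemma nu_star_eq:
  assumes "0 < n" "min n 2 \<le> m" "m \<le> n"
  shows "nu_star n m = (n + 1) div 2 + of_bool (even n \<and> odd m)"
proof -
  obtain W c where "W \<in> A_star n m" "c \<in> vecs n" "MW n W c \<le> (n + 1) div 2 + of_bool (even n \<and> odd m)"
    using exists_A_star_MW_le[OF assms(2,3)] by blast
  then show ?thesis
    unfolding nu_star_def using MW_ge_A_star assms(1) by (intro Min_MW_eqI) auto
qed

lemma nu_eq: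
  assumes "0 < n" "min n 2 \<le> m"
  shows "nu n m = (n + 1) div 2"
proof -
  obtain W c where W: "W \<in> A_star n (min n 2)" and "c \<in> vecs n"
      and "MW n W c \<le> (n + 1) div 2 + of_bool (even n \<and> odd (min n 2))"
    using exists_A_star_MW_le[of n "min n 2"] by auto
  moreover have "W \<in> A n m"
    using A_star_subset_A[OF assms] W by blast
  moreover have "(n + 1) div 2 \<le> MW n W c" if "W \<in> A n m" for W c
    using MW_ge_half[of n W c] that by (auto simp: A_def)
  ultimately show ?thesis
    unfolding nu_def by (intro Min_MW_eqI) (auto simp: min_def split: if_splits)
qed

lemma nat_ceiling_half: "nat \<lceil>real n / 2\<rceil> = (n + 1) div 2"
proof (cases "even n")
  case True
  then show ?thesis by (auto elim!: evenE)
next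
  case False
  then obtain k where k: "n = 2 * k + 1"
    by (blast elim: oddE)
  have "\<lceil>real n / 2\<rceil> = int k + 1"
    by (rule ceiling_unique) (auto simp: k)
  then show ?thesis
    by (simp add: k)
qed

theorem theorem3p2:
  fixes n m :: nat
  assumes "0 < n" and "1 < m"
  shows "(nu1 n = nu n m \<and> nu n m = nat \<lceil>real n / 2\<rceil>)
    \<and> (n \<ge> m \<longrightarrow> nu_star n m = (if even n \<and> odd m then nu n m + 1 else nu n m))
    \<and> (\<forall>k>1. nu_star k 2 = nu_star1 k \<and> nu_star1 k = nu1 k)"
proof (intro conjI impI allI)
  have nu: "nu n m = (n + 1) div 2" "nu n n = (n + 1) div 2"
    using assms nu_eq[of n m] nu_eq[of n n] by auto
  then show "nu n n = nu n m" "nu n m = nat \<lceil>real n / 2\<rceil>"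
    by (simp_all add: nat_ceiling_half)
  show "nu_star n m = (if even n \<and> odd m then nu n m + 1 else nu n m)" if "m \<le> n"
    using nu_star_eq[of n m] that assms nu by auto
next
  fix k :: nat assume "1 < k"
  then have "nu_star k 2 = (k + 1) div 2" "nu_star k k = (k + 1) div 2" "nu k k = (k + 1) div 2"
    using nu_star_eq[of k 2] nu_star_eq[of k k] nu_eq[of k k] by auto
  then show "nu_star k 2 = nu_star k k" "nu_star k k = nu k k"
    by simp_all
qed

end
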